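(* Let $U=\{(x_1,x_2,p_1,p_2)\in\mathbb R^2\times(\mathbb R^2\setminus\{0\}) : x_1p_1+x_2p_2\neq 0\}$, and on $U$ define $\bar D=x_1p_1+x_2p_2$, $\bar J^0=x_1p_2-x_2p_1$, $\bar J^1=-x_2\sqrt{p_1^2+p_2^2}$, $\bar J^2=x_1\sqrt{p_1^2+p_2^2}$. For real constants $a,b,c$ let $$\bar H_{a,b,c}=\operatorname{sign}(\bar D)\,\big(\bar D+a\bar J^0+b\bar J^1+c\bar J^2\big).$$ Then $\bar H_{a,b,c}$ is bounded from below on $U$ if and only if $a=b=c=0$; in that case $\bar H_{0,0,0}=|\bar D|\ge 0$.
   Context: Here $(x_1,x_2,p_1,p_2)$ are coordinates on the physical phase space of the (group-completed) metric-torus sector of 2+1 gravity, and the functions $\bar D$, $\bar J^\mu$ are the projections of the dilatation and Lorentz generators; the functions $\bar H_{a,b,c}$ are the candidate Hamiltonians generating future-directed time evolution along the constant-mean-curvature surfaces. The set $U$ corresponds to the (non-static) physical phase space, on which $\bar D\neq 0$. *)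

theory Defs
  imports Complex_Main
begin

definition U :: "(real \<times> real \<times> real \<times> real) set" where
  "U = {(x1, x2, p1, p2). (p1, p2) \<noteq> (0, 0) \<and> x1 * p1 + x2 * p2 \<noteq> 0}"

definition Dbar :: "real \<Rightarrow> real \<Rightarrow> real \<Rightarrow> real \<Rightarrow> real" where
  "Dbar x1 x2 p1 p2 = x1 * p1 + x2 * p2"

definition J0bar :: "real \<Rightarrow> real \<Rightarrow> real \<Rightarrow> real \<Rightarrow> real" where
  "J0bar x1 x2 p1 p2 = x1 * p2 - x2 * p1"

definition J1bar :: "real \<Rightarrow> real \<Rightarrow> real \<Rightarrow> real \<Rightarrow> real" where
  "J1bar x1 x2 p1 p2 = - x2 * sqrt (p1^2 + p2^2)"

definition J2bar :: "real \<Rightarrow> real \<Rightarrow> real \<Rightarrow> real \<Rightarrow> real" where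
  "J2bar x1 x2 p1 p2 = x1 * sqrt (p1^2 + p2^2)"

definition Hbar :: "real \<Rightarrow> real \<Rightarrow> real \<Rightarrow> real \<times> real \<times> real \<times> real \<Rightarrow> real" where
  "Hbar a b c z = (case z of (x1, x2, p1, p2) \<Rightarrow>
     sgn (Dbar x1 x2 p1 p2) *
       (Dbar x1 x2 p1 p2 + a * J0bar x1 x2 p1 p2 + b * J1bar x1 x2 p1 p2 + c * J2bar x1 x2 p1 p2))"

end

theory Submission
  imports Defs
begin

text \<open>Along the lines (1, t, 1, 0), (-1, t, -1, 0) and (t, 1, 0, 1), all contained in U with
  \<open>\<bar>Dbar\<bar> = 1\<close>, the Hamiltonian is affine in t with slopes -(a + b), a - b and a + c.
  An affine function bounded below has zero slope, which forces a = b = c = 0; conversely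
  \<open>Hbar 0 0 0 = \<bar>Dbar\<bar>\<close>.\<close>

lemma affine_bdd_below_imp_slope_zero:
  fixes \<alpha> \<beta> :: "'a :: linordered_field"
  assumes "bdd_below (range (\<lambda>t. \<alpha> + \<beta> * t))"
  shows "\<beta> = 0"
proof (rule ccontr)
  assume "\<beta> \<noteq> 0"
  from assms obtain M where "\<And>t. M \<le> \<alpha> + \<beta> * t"
    by (auto simp: bdd_below_def)
  then have "M \<le> \<alpha> + \<beta> * ((M - 1 - \<alpha>) / \<beta>)" .
  with \<open>\<beta> \<noteq> 0\<close> show False by simp
qed

lemma Hbar_000: "Hbar 0 0 0 (x1, x2, p1, p2) = \<bar>Dbar x1 x2 p1 p2\<bar>"
  by (simp add: Hbar_def sgn_mult_abs abs_sgn)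

lemma Hbar_line1: "Hbar a b c (1, t, 1, 0) = (1 + c) + (- (a + b)) * t"
  and Hbar_line2: "Hbar a b c (-1, t, -1, 0) = (1 - c) + (a - b) * t"
  and Hbar_line3: "Hbar a b c (t, 1, 0, 1) = (1 - b) + (a + c) * t"
  by (simp_all add: Hbar_def Dbar_def J0bar_def J1bar_def J2bar_def algebra_simps)

lemma lines_subset_U:
  "range (\<lambda>t. (1, t, 1, 0)) \<subseteq> U"
  "range (\<lambda>t. (-1, t, -1, 0)) \<subseteq> U"
  "range (\<lambda>t. (t, 1, 0, 1)) \<subseteq> U"
  by (auto simp: U_def)

lemma bdd_below_Hbar_imp_zero:
  assumes bdd: "bdd_below (Hbar a b c ` U)"
  shows "a = 0 \<and> b = 0 \<and> c = 0"
proof -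
  have slope_zero: "\<beta> = 0"
    if "range \<gamma> \<subseteq> U" and "\<And>t. Hbar a b c (\<gamma> t) = \<alpha> + \<beta> * t" for \<gamma> and \<alpha> \<beta> :: real
  proof (rule affine_bdd_below_imp_slope_zero)
    have "range (\<lambda>t. \<alpha> + \<beta> * t) = Hbar a b c ` range \<gamma>"
      by (simp add: image_image that(2))
    also have "\<dots> \<subseteq> Hbar a b c ` U"
      using that(1) by (rule image_mono)
    finally show "bdd_below (range (\<lambda>t. \<alpha> + \<beta> * t))"
      using bdd by (rule bdd_below_mono[rotated])
  qed
  have "- (a + b) = 0" by (rule slope_zero[OF lines_subset_U(1) Hbar_line1])
  moreover have "a - b = 0" by (rule slope_zero[OF lines_subset_U(2) Hbar_line2])
  moreover have "a + c = 0" by (rule slope_zero[OF lines_subset_U(3) Hbar_line3])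
  ultimately show ?thesis by linarith
qed

lemma bdd_below_Hbar_000: "bdd_below (Hbar 0 0 0 ` U)"
  by (rule bdd_belowI[where m = 0]) (auto simp: Hbar_000)

theorem mainTheorem2:
  fixes a b c :: real
  shows "(bdd_below (Hbar a b c ` U) \<longleftrightarrow> (a = 0 \<and> b = 0 \<and> c = 0))
         \<and> (\<forall>x1 x2 p1 p2. (x1, x2, p1, p2) \<in> U \<longrightarrow>
              Hbar 0 0 0 (x1, x2, p1, p2) = \<bar>Dbar x1 x2 p1 p2\<bar>
              \<and> Hbar 0 0 0 (x1, x2, p1, p2) \<ge> 0)"
  using bdd_below_Hbar_imp_zero bdd_below_Hbar_000 by (auto simp: Hbar_000)

end
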